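(* Let $d\ge 3$ and let $A=\lambda B+(1-\lambda)B'$ with $0<\lambda<1$, where $B,B'$ are $d$-dimensional $(0,1)$-matrices of order $4$ each equivalent to $\mathcal{M}_4^d$. Suppose the tessellation index of $A$ is $d-1$, and suppose that no new entry is added to the support of any filled subcube, i.e. $\operatorname{supp}(B')\cap C\subseteq\operatorname{supp}(B)$ for every filled subcube $C$ of $B$ and $\operatorname{supp}(B)\cap C'\subseteq\operatorname{supp}(B')$ for every filled subcube $C'$ of $B'$. Then $A$ is equivalent to a matrix from $\mathcal{L}_4^d$.
   Context: $\mathcal{M}_n^d$ has entry $1$ at $\alpha$ iff $\alpha_1+\dots+\alpha_d\equiv0\pmod n$. $\mathcal{L}_n^d$ is the family of matrices $\mu\mathcal{M}_n^d+(1-\mu)M$, $0<\mu<1$, where $M$ is the $(0,1)$-matrix with support $\{\alpha:\alpha_1+\dots+\alpha_{d-1}+\pi(\alpha_d)\equiv0\pmod n\}$, $\pi$ the transposition of $0$ and $1$. Equivalence: permuting coordinate positions and/or applying a permutation of $\{0,\dots,n-1\}$ to a single coordinate, repeatedly. The support $\operatorname{supp}$ is the set of indices of nonzero entries. Define $p_1,p_2,p_3:\{0,1,2,3\}\to\{0,1\}$ by $p_1(0)=p_1(1)=0,\ p_1(2)=p_1(3)=1$; $p_2(0)=p_2(2)=0,\ p_2(1)=p_2(3)=1$; $p_3(0)=p_3(3)=0,\ p_3(1)=p_3(2)=1$; and $\mu_1(0)=\mu_1(2)=0,\ \mu_1(1)=\mu_1(3)=1$; $\mu_2(0)=\mu_2(1)=0,\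 \mu_2(2)=\mu_2(3)=1$; $\mu_3(0)=\mu_3(2)=0,\ \mu_3(1)=\mu_3(3)=1$. $Q_s^d=\{y\in\{0,1\}^d:w(y)\equiv s\pmod 2\}$ ($w$ = Hamming weight). For $\mathcal{E}\in\{1,2,3\}^d$, $s\in\{0,1\}$, $\lambda:Q_s^d\to\{0,1\}$, the block permutation with parameters $(\mathcal{E},\lambda,s)$ is the $(0,1)$-matrix with entry $1$ at $\alpha$ iff $\bigoplus_i p_{\varepsilon_i}(\alpha_i)=s$ and $\bigoplus_i\mu_{\varepsilon_i}(\alpha_i)\oplus\lambda(p_{\varepsilon_1}(\alpha_1),\dots,p_{\varepsilon_d}(\alpha_d))=0$. Every matrix equivalent to $\mathcal{M}_4^d$ ($d\ge3$) is a block permutation for a unique parameter triple; relative to these, its subcubes are $C_y=\{\alpha:p_{\varepsilon_i}(\alpha_i)=y_i\ \forall i\}$ and $C_y$ is filled if $w(y)\equiv s\pmod 2$. The intersection of a subcube of $B$ with a subcube of $B'$ is either empty or a product set of size $2^j$; the tessellation index of $\lambda B+(1-\lambda)B'$ is the maximum of such $j$ over pairs (filled subcube of $B$, filled subcube of $B'$) with nonempty intersection, and $-\infty$ if all are empty. *)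

theory Defs
  imports "HOL-Library.Extended_Real" "HOL-Combinatorics.Permutations"
begin

text \<open>Matrices are real-valued functions on indices; only values on idx matter.\<close>

definition idx :: "nat \<Rightarrow> nat \<Rightarrow> (nat \<Rightarrow> nat) set" where
  "idx d n = {\<alpha>. (\<forall>i<d. \<alpha> i < n) \<and> (\<forall>i\<ge>d. \<alpha> i = 0)}"

type_synonym matrix = "(nat \<Rightarrow> nat) \<Rightarrow> real"

definition supp :: "nat \<Rightarrow> nat \<Rightarrow> matrix \<Rightarrow> (nat \<Rightarrow> nat) set" where
  "supp d n A = {\<alpha> \<in> idx d n. A \<alpha> \<noteq> 0}"

definition Mmat :: "nat \<Rightarrow> nat \<Rightarrow> matrix" where
  "Mmat n d \<alpha> = (if (\<Sum>i<d. \<alpha> i) mod n = 0 then 1 else 0)"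

definition pi01 :: "nat \<Rightarrow> nat" where
  "pi01 a = (if a = 0 then 1 else if a = 1 then 0 else a)"

definition Mpi :: "nat \<Rightarrow> nat \<Rightarrow> matrix" where
  "Mpi n d \<alpha> = (if ((\<Sum>i<d - 1. \<alpha> i) + pi01 (\<alpha> (d - 1))) mod n = 0 then 1 else 0)"

definition Lmat :: "nat \<Rightarrow> nat \<Rightarrow> real \<Rightarrow> matrix" where
  "Lmat n d \<mu> \<alpha> = \<mu> * Mmat n d \<alpha> + (1 - \<mu>) * Mpi n d \<alpha>"

definition in_L :: "nat \<Rightarrow> nat \<Rightarrow> matrix \<Rightarrow> bool" where
  "in_L n d A \<longleftrightarrow> (\<exists>\<mu>. 0 < \<mu> \<and> \<mu> < 1 \<and> A = Lmat n d \<mu>)"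

definition equiv_step :: "nat \<Rightarrow> nat \<Rightarrow> matrix \<Rightarrow> matrix \<Rightarrow> bool" where
  "equiv_step d n A A' \<longleftrightarrow>
     (\<exists>\<tau>. \<tau> permutes {..<d} \<and> (\<forall>\<alpha>\<in>idx d n. A' \<alpha> = A (\<alpha> \<circ> \<tau>))) \<or>
     (\<exists>i<d. \<exists>\<pi>. \<pi> permutes {..<n} \<and> (\<forall>\<alpha>\<in>idx d n. A' \<alpha> = A (\<alpha>(i := \<pi> (\<alpha> i)))))"

definition equivalent :: "nat \<Rightarrow> nat \<Rightarrow> matrix \<Rightarrow> matrix \<Rightarrow> bool" where
  "equivalent d n = (equiv_step d n)\<^sup>*\<^sup>*"

definition pf :: "nat \<Rightarrow> nat \<Rightarrow> nat" where
  "pf e a = (if e = 1 then (if a = 0 \<or> a = 1 then 0 else 1)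
             else if e = 2 then (if a = 0 \<or> a = 2 then 0 else 1)
             else (if a = 0 \<or> a = 3 then 0 else 1))"

definition muf :: "nat \<Rightarrow> nat \<Rightarrow> nat" where
  "muf e a = (if e = 1 then (if a = 0 \<or> a = 2 then 0 else 1)
              else if e = 2 then (if a = 0 \<or> a = 1 then 0 else 1)
              else (if a = 0 \<or> a = 2 then 0 else 1))"

definition cube :: "nat \<Rightarrow> (nat \<Rightarrow> nat) set" where
  "cube d = {y. (\<forall>i<d. y i < 2) \<and> (\<forall>i\<ge>d. y i = 0)}"

definition weight :: "nat \<Rightarrow> (nat \<Rightarrow> nat) \<Rightarrow> nat" where
  "weight d y = (\<Sum>i<d. y i)"

definition Qs :: "nat \<Rightarrow> nat \<Rightarrow> (nat \<Rightarrow> nat) set" where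
  "Qs d s = {y \<in> cube d. weight d y mod 2 = s mod 2}"

definition pvec :: "nat \<Rightarrow> (nat \<Rightarrow> nat) \<Rightarrow> (nat \<Rightarrow> nat) \<Rightarrow> (nat \<Rightarrow> nat)" where
  "pvec d E \<alpha> = (\<lambda>i. if i < d then pf (E i) (\<alpha> i) else 0)"

definition bp_params :: "nat \<Rightarrow> (nat \<Rightarrow> nat) \<Rightarrow> ((nat \<Rightarrow> nat) \<Rightarrow> nat) \<Rightarrow> nat \<Rightarrow> bool" where
  "bp_params d E lb s \<longleftrightarrow> (\<forall>i<d. E i \<in> {1,2,3}) \<and> s \<in> {0,1} \<and> (\<forall>y\<in>Qs d s. lb y \<in> {0,1})"

text \<open>Block permutation with parameters (E, lambda, s) (XOR = sum mod 2).\<close>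
definition blockperm :: "nat \<Rightarrow> (nat \<Rightarrow> nat) \<Rightarrow> ((nat \<Rightarrow> nat) \<Rightarrow> nat) \<Rightarrow> nat \<Rightarrow> matrix" where
  "blockperm d E lb s \<alpha> =
     (if (\<Sum>i<d. pf (E i) (\<alpha> i)) mod 2 = s
         \<and> ((\<Sum>i<d. muf (E i) (\<alpha> i)) + lb (pvec d E \<alpha>)) mod 2 = 0 then 1 else 0)"

definition subcube :: "nat \<Rightarrow> (nat \<Rightarrow> nat) \<Rightarrow> (nat \<Rightarrow> nat) \<Rightarrow> (nat \<Rightarrow> nat) set" where
  "subcube d E y = {\<alpha> \<in> idx d 4. \<forall>i<d. pf (E i) (\<alpha> i) = y i}"

definition filled_subcubes :: "nat \<Rightarrow> (nat \<Rightarrow> nat) \<Rightarrow> nat \<Rightarrow> (nat \<Rightarrow> nat) set set" where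
  "filled_subcubes d E s = subcube d E ` Qs d s"

text \<open>Tessellation index of lambda B + (1-lambda) B' (B with parameters (E,_,s),
  B' with (E',_,s')): the maximum j such that some filled subcube of B meets some
  filled subcube of B' in exactly 2^j entries; -infinity if all intersections are empty.\<close>
definition tess_index :: "nat \<Rightarrow> (nat \<Rightarrow> nat) \<Rightarrow> nat \<Rightarrow> (nat \<Rightarrow> nat) \<Rightarrow> nat \<Rightarrow> ereal" where
  "tess_index d E s E' s' =
     Sup ((\<lambda>j. ereal (real j)) `
        {j. \<exists>C\<in>filled_subcubes d E s. \<exists>C'\<in>filled_subcubes d E' s'.
               C \<inter> C' \<noteq> {} \<and> card (C \<inter> C') = 2 ^ j})"

end

theory Submission
  imports Defs "HOL-Library.Numeral_Type"
begin

text \<open>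
  A matrix equivalent to \<open>M\<^sub>4\<^sup>d\<close> is the indicator of \<open>\<Sum>\<^sub>i \<phi>\<^sub>i(\<alpha>\<^sub>i) = 0\<close> in \<open>\<int>/4\<close> for bijections
  \<open>\<phi>\<^sub>i : {0..3} \<rightarrow> \<int>/4\<close>, and for a block permutation the \<open>p\<^sub>\<epsilon>\<^sub>i\<close>-blocks of coordinate \<open>i\<close>
  are exactly the preimages of the cosets \<open>{x, x + 2}\<close>. Tessellation index \<open>d - 1\<close> means
  that \<open>E\<close> and \<open>E'\<close> differ in exactly one coordinate \<open>k\<close>; hence the transition maps
  \<open>\<psi>\<^sub>r = \<phi>'\<^sub>r \<circ> \<phi>\<^sub>r\<^sup>-\<^sup>1\<close> commute with \<open>+2\<close>, i.e. are affine \<open>x \<mapsto> e\<^sub>r x + t\<^sub>r\<close>, exactly for \<open>r \<noteq> k\<close>.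
  The support hypothesis says that no \<open>x\<close> with \<open>\<Sum> \<psi>\<^sub>r(x\<^sub>r) = 0\<close> has \<open>\<Sum> x\<^sub>r = 2\<close>. This forces
  all \<open>e\<^sub>r\<close> to agree and leaves for \<open>\<psi>\<^sub>k\<close>, up to translations, only the transposition of
  \<open>0\<close> and \<open>1\<close>. Relabelling the symbols by translations and moving coordinate \<open>k\<close> to the
  last position then turns \<open>A\<close> into \<open>\<lambda> M\<^sub>4\<^sup>d + (1 - \<lambda>) M\<close>.
\<close>

section \<open>Arithmetic in \<open>\<int>/4\<close>\<close>

lemma Z4_cases: "(x::4) = 0 \<or> x = 1 \<or> x = 2 \<or> x = 3"
proof (induct x)
  case (of_int z)
  then have "z = 0 \<or> z = 1 \<or> z = 2 \<or> z = 3" by auto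
  then show ?case by auto
qed

lemma Z4_all: "(\<forall>x::4. P x) \<longleftrightarrow> P 0 \<and> P 1 \<and> P 2 \<and> P 3"
proof (intro iffI allI)
  fix x :: 4
  assume "P 0 \<and> P 1 \<and> P 2 \<and> P 3"
  then show "P x" using Z4_cases[of x] by blast
qed simp

lemma Z4_ex: "(\<exists>x::4. P x) \<longleftrightarrow> P 0 \<or> P 1 \<or> P 2 \<or> P 3"
  using Z4_all[of "\<lambda>x. \<not> P x"] by blast

lemma Z4_numeral_reduce: "(4::4) = 0" "(5::4) = 1" "(6::4) = 2" "(7::4) = 3"
  by simp_all

lemma Z4_eq_neg_iff: "(u::4) = - u \<longleftrightarrow> u = 0 \<or> u = 2"
  using Z4_cases[of u] by auto

lemma Z4_double_eq_iff: "2 * (u::4) = 2 * v \<longleftrightarrow> u = v \<or> u = v + 2"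
  using Z4_cases[of u] Z4_cases[of v] by (elim disjE) (simp_all add: Z4_numeral_reduce)

lemma Z4_double_neq: "2 * (u::4) \<noteq> 2 * v \<Longrightarrow> 2 * u = 2 * v + 2"
  using Z4_cases[of u] Z4_cases[of v] by (elim disjE) (simp_all add: Z4_numeral_reduce)

lemma Z4_double_eq_two: "(w::4) \<noteq> 0 \<Longrightarrow> w \<noteq> 2 \<Longrightarrow> 2 * w = 2"
  using Z4_cases[of w] by (elim disjE) (simp_all add: Z4_numeral_reduce)

lemma Z4_unit_square: "(e::4) = 1 \<or> e = 3 \<Longrightarrow> e * e = 1"
  by (elim disjE) (simp_all add: Z4_numeral_reduce)

lemma Z4_unit_double: "(e::4) = 1 \<or> e = 3 \<Longrightarrow> 2 * e = 2"
  by (elim disjE) (simp_all add: Z4_numeral_reduce)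

lemma unit_mult_eq_0_iff:
  fixes e y :: "'a::comm_ring_1"
  assumes "e * e = 1"
  shows "e * y = 0 \<longleftrightarrow> y = 0"
proof
  assume "e * y = 0"
  then have "e * (e * y) = 0" by simp
  then show "y = 0" by (simp add: mult.assoc[symmetric] assms)
qed simp

lemma less_4_cases: "(n::nat) < 4 \<Longrightarrow> n = 0 \<or> n = 1 \<or> n = 2 \<or> n = 3"
  by auto

lemma of_nat_Z4_eq_iff: "(of_nat m :: 4) = of_nat n \<longleftrightarrow> m mod 4 = n mod 4"
proof -
  have "(of_nat m :: 4) = of_nat n \<longleftrightarrow> (of_int (int m - int n) :: 4) = 0" by simp
  also have "\<dots> \<longleftrightarrow> 4 dvd (int m - int n)" unfolding of_int_eq_0_iff_char_dvd by simp
  also have "\<dots> \<longleftrightarrow> m mod 4 = n mod 4" by presburger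
  finally show ?thesis .
qed

lemma of_nat_Z4_eq_0_iff: "(of_nat n :: 4) = 0 \<longleftrightarrow> n mod 4 = 0"
  using of_nat_Z4_eq_iff[of n 0] by simp

lemma double_of_nat_Z4_eq_iff: "2 * (of_nat m :: 4) = 2 * of_nat n \<longleftrightarrow> m mod 2 = n mod 2"
proof -
  have "2 * (of_nat m :: 4) = 2 * of_nat n \<longleftrightarrow> (2 * m) mod 4 = (2 * n) mod 4"
    using of_nat_Z4_eq_iff[of "2 * m" "2 * n"] by simp
  also have "\<dots> \<longleftrightarrow> 2 * (m mod 2) = 2 * (n mod 2)"
    by (simp flip: mod_mult_mult1)
  also have "\<dots> \<longleftrightarrow> m mod 2 = n mod 2" by simp
  finally show ?thesis .
qed

lemma bij_betw_of_nat_Z4: "bij_betw (of_nat :: nat \<Rightarrow> 4) {..<4} UNIV"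
proof (rule bij_betw_imageI)
  show "inj_on (of_nat :: nat \<Rightarrow> 4) {..<4}"
    by (rule inj_onI) (simp add: of_nat_Z4_eq_iff)
  have "(x::4) \<in> of_nat ` {..<4}" for x
    using Z4_cases[of x] by (auto intro: image_eqI[where x = 0] image_eqI[where x = 1]
      image_eqI[where x = 2] image_eqI[where x = 3])
  then show "(of_nat :: nat \<Rightarrow> 4) ` {..<4} = UNIV" by blast
qed

lemma commutes_two_affine:
  fixes \<psi> :: "4 \<Rightarrow> 4"
  assumes "inj \<psi>" and "\<forall>x. \<psi> (x + 2) = \<psi> x + 2"
  shows "\<exists>e t. (e = 1 \<or> e = 3) \<and> (\<forall>x. \<psi> x = e * x + t)"
proof (intro exI conjI)
  let ?e = "\<psi> 1 - \<psi> 0"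
  have two: "\<psi> 2 = \<psi> 0 + 2" and three: "\<psi> 3 = \<psi> 1 + 2"
    using assms(2)[rule_format, of 0] assms(2)[rule_format, of 1] by simp_all
  have "\<psi> 1 \<noteq> \<psi> 0" "\<psi> 3 \<noteq> \<psi> 0" by (simp_all add: inj_eq[OF assms(1)])
  then show e: "?e = 1 \<or> ?e = 3"
    using three Z4_cases[of ?e] by (auto simp: algebra_simps)
  show "\<forall>x. \<psi> x = ?e * x + \<psi> 0"
    unfolding Z4_all using two three e by (auto simp: algebra_simps)
qed

lemma Z4_perm_normal_form:
  fixes \<chi> :: "4 \<Rightarrow> 4"
  assumes "inj \<chi>" and "\<forall>x. \<chi> x \<noteq> x + 2" and "\<not> (\<forall>x. \<chi> (x + 2) = \<chi> x + 2)"
  shows "\<exists>t. \<forall>x. \<chi> (x + t) = transpose 0 1 x + t"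
proof -
  have "\<chi> 0 \<noteq> \<chi> 1" "\<chi> 0 \<noteq> \<chi> 2" "\<chi> 0 \<noteq> \<chi> 3" "\<chi> 1 \<noteq> \<chi> 2" "\<chi> 1 \<noteq> \<chi> 3" "\<chi> 2 \<noteq> \<chi> 3"
    by (simp_all add: inj_eq[OF assms(1)])
  moreover have "\<chi> 0 \<noteq> 2" "\<chi> 1 \<noteq> 3" "\<chi> 2 \<noteq> 0" "\<chi> 3 \<noteq> 1"
    using assms(2) unfolding Z4_all by (simp_all add: Z4_numeral_reduce)
  moreover have "\<chi> 2 \<noteq> \<chi> 0 + 2 \<or> \<chi> 3 \<noteq> \<chi> 1 + 2"
    using assms(3) unfolding Z4_all by (simp add: Z4_numeral_reduce)
  ultimately show ?thesis
    unfolding Z4_all Z4_ex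
    using Z4_cases[of "\<chi> 0"] Z4_cases[of "\<chi> 1"] Z4_cases[of "\<chi> 2"] Z4_cases[of "\<chi> 3"]
    by (elim disjE) (simp_all add: transpose_def Z4_numeral_reduce)
qed

lemma ex_less_avoiding_two: "3 \<le> d \<Longrightarrow> \<exists>m<d. m \<noteq> i \<and> m \<noteq> (l::nat)"
  by (rule exI[of _ "if 0 \<notin> {i, l} then 0 else if 1 \<notin> {i, l} then 1 else 2"]) auto

lemma sum_fun_upd:
  fixes g :: "'a \<Rightarrow> 'b::ab_group_add"
  assumes "finite A" and "i \<in> A"
  shows "sum (g(i := u)) A = sum g A - g i + u"
proof -
  have "sum (g(i := u)) A = u + sum g (A - {i})"
    using assms by (simp add: sum.remove)
  also have "\<dots> = sum g A - g i + u"
    using assms by (simp add: sum.remove algebra_simps)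
  finally show ?thesis .
qed

lemma sum_remove_two:
  assumes "finite A" "j \<in> A" "l \<in> A" "j \<noteq> l"
  shows "sum g A = g j + g l + sum g (A - {j, l})"
proof -
  have "sum g A = g j + sum g (A - {j})" using assms by (simp add: sum.remove)
  also have "sum g (A - {j}) = g l + sum g (A - {j} - {l})" using assms by (simp add: sum.remove)
  finally show ?thesis by (simp add: Diff_insert2[symmetric] add.assoc)
qed

section \<open>Matrices equivalent to \<open>M\<^sub>4\<^sup>d\<close>\<close>

definition labelling :: "nat \<Rightarrow> (nat \<Rightarrow> nat \<Rightarrow> 4) \<Rightarrow> bool" where
  "labelling d \<phi> \<longleftrightarrow> (\<forall>i<d. bij_betw (\<phi> i) {..<4} UNIV)"

definition sum_matrix :: "nat \<Rightarrow> (nat \<Rightarrow> nat \<Rightarrow> 4) \<Rightarrow> matrix" where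
  "sum_matrix d \<phi> \<alpha> = (if (\<Sum>i<d. \<phi> i (\<alpha> i)) = 0 then 1 else 0)"

lemma labelling_inj:
  assumes "labelling d \<phi>" "i < d" "a < 4" "b < 4" "\<phi> i a = \<phi> i b"
  shows "a = b"
  using assms bij_betw_imp_inj_on[of "\<phi> i"] by (auto simp: labelling_def inj_on_def)

lemma labelling_surj_idx:
  assumes "labelling d \<phi>"
  shows "\<exists>\<alpha>\<in>idx d 4. \<forall>i<d. \<phi> i (\<alpha> i) = x i"
proof
  let ?\<alpha> = "\<lambda>i. if i < d then inv_into {..<4} (\<phi> i) (x i) else 0"
  have bij: "\<And>i. i < d \<Longrightarrow> bij_betw (\<phi> i) {..<4} UNIV" using assms by (simp add: labelling_def)
  show "?\<alpha> \<in> idx d 4"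
    using bij by (auto simp: idx_def bij_betw_def intro!: inv_into_into[of _ _ "{..<4}", simplified])
  show "\<forall>i<d. \<phi> i (?\<alpha> i) = x i"
    using bij bij_betw_inv_into_right by fastforce
qed

lemma Mmat_eq_sum_matrix: "Mmat 4 d = sum_matrix d (\<lambda>_. of_nat)"
  by (rule ext) (simp add: Mmat_def sum_matrix_def of_nat_Z4_eq_0_iff flip: of_nat_sum)

lemma of_nat_pi01: "n < 4 \<Longrightarrow> (of_nat (pi01 n) :: 4) = transpose 0 1 (of_nat n)"
  by (drule less_4_cases) (auto simp: pi01_def transpose_def)

lemma Mpi_eq_sum_matrix:
  assumes "\<alpha> \<in> idx d 4" and "0 < d"
  shows "Mpi 4 d \<alpha> = sum_matrix d (\<lambda>i. if i = d - 1 then transpose 0 1 \<circ> of_nat else of_nat) \<alpha>"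
proof -
  obtain m where m: "d = Suc m" using assms(2) gr0_conv_Suc by blast
  have "(\<Sum>i<d. (if i = d - 1 then transpose 0 1 \<circ> of_nat else of_nat) (\<alpha> i))
      = (\<Sum>i<d - 1. (of_nat (\<alpha> i) :: 4)) + transpose 0 1 (of_nat (\<alpha> (d - 1)))"
    unfolding m by simp
  also have "\<dots> = of_nat ((\<Sum>i<d - 1. \<alpha> i) + pi01 (\<alpha> (d - 1)))"
    using assms by (simp add: of_nat_pi01 idx_def)
  finally show ?thesis
    by (simp only: Mpi_def sum_matrix_def of_nat_Z4_eq_0_iff)
qed

lemma idx_comp_permutes: "\<alpha> \<in> idx d n \<Longrightarrow> \<tau> permutes {..<d} \<Longrightarrow> \<alpha> \<circ> \<tau> \<in> idx d n"
  by (auto simp: idx_def permutes_not_in dest: permutes_in_image[of \<tau> "{..<d}"])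

lemma sum_matrix_comp_permutes:
  assumes "\<tau> permutes {..<d}"
  shows "sum_matrix d \<phi> (\<alpha> \<circ> \<tau>) = sum_matrix d (\<lambda>j. \<phi> (inv \<tau> j)) \<alpha>"
proof -
  have "(\<Sum>i<d. \<phi> i ((\<alpha> \<circ> \<tau>) i)) = (\<Sum>j<d. \<phi> (inv \<tau> j) (\<alpha> j))"
    using sum.permute[OF permutes_inv[OF assms], of "\<lambda>i. \<phi> i (\<alpha> (\<tau> i))"]
    by (simp add: permutes_inverses[OF assms])
  then show ?thesis by (simp add: sum_matrix_def)
qed

lemma equivalent_M_imp_sum_matrix:
  assumes "equivalent d 4 X (Mmat 4 d)"
  shows "\<exists>\<phi>. labelling d \<phi> \<and> (\<forall>\<alpha>\<in>idx d 4. X \<alpha> = sum_matrix d \<phi> \<alpha>)"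
  using assms unfolding equivalent_def
proof (induction rule: converse_rtranclp_induct)
  case base
  show ?case
    using bij_betw_of_nat_Z4 by (auto simp: labelling_def Mmat_eq_sum_matrix)
next
  case (step X Y)
  then obtain \<phi> where \<phi>: "labelling d \<phi>" and Y: "\<forall>\<alpha>\<in>idx d 4. Y \<alpha> = sum_matrix d \<phi> \<alpha>"
    by blast
  from step(1) show ?case unfolding equiv_step_def
  proof (elim disjE exE conjE)
    fix \<tau> assume \<tau>: "\<tau> permutes {..<d}" and XY: "\<forall>\<alpha>\<in>idx d 4. Y \<alpha> = X (\<alpha> \<circ> \<tau>)"
    have "X \<beta> = sum_matrix d (\<lambda>j. \<phi> (\<tau> j)) \<beta>" if "\<beta> \<in> idx d 4" for \<beta>
    proof -
      have "\<beta> \<circ> inv \<tau> \<in> idx d 4" by (rule idx_comp_permutes[OF that permutes_inv[OF \<tau>]])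
      then have "X (\<beta> \<circ> inv \<tau> \<circ> \<tau>) = sum_matrix d \<phi> (\<beta> \<circ> inv \<tau>)" using XY Y by simp
      then show ?thesis
        using permutes_inv[OF \<tau>] by (simp add: sum_matrix_comp_permutes permutes_inv_inv[OF \<tau>]
          comp_assoc permutes_inv_o(2)[OF \<tau>])
    qed
    moreover have "labelling d (\<lambda>j. \<phi> (\<tau> j))"
      using \<phi> \<tau> by (auto simp: labelling_def dest: permutes_in_image)
    ultimately show ?case by blast
  next
    fix i \<pi> assume i: "i < d" and \<pi>: "\<pi> permutes {..<4}"
      and XY: "\<forall>\<alpha>\<in>idx d 4. Y \<alpha> = X (\<alpha>(i := \<pi> (\<alpha> i)))"
    let ?\<phi> = "\<phi>(i := \<phi> i \<circ> inv \<pi>)"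
    have "X \<beta> = sum_matrix d ?\<phi> \<beta>" if \<beta>: "\<beta> \<in> idx d 4" for \<beta>
    proof -
      let ?\<gamma> = "\<beta>(i := inv \<pi> (\<beta> i))"
      have "?\<gamma> \<in> idx d 4"
        using \<beta> i permutes_in_image[OF permutes_inv[OF \<pi>]] by (auto simp: idx_def)
      moreover have "?\<gamma>(i := \<pi> (?\<gamma> i)) = \<beta>" by (simp add: permutes_inverses(1)[OF \<pi>])
      ultimately have "X \<beta> = sum_matrix d \<phi> ?\<gamma>" using XY Y by metis
      also have "\<dots> = sum_matrix d ?\<phi> \<beta>"
        unfolding sum_matrix_def by (rule arg_cong[where f = "\<lambda>x. if x = 0 then 1 else 0"], rule sum.cong) auto
      finally show ?thesis .
    qed
    moreover have "labelling d ?\<phi>"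
      using \<phi> \<pi> by (auto simp: labelling_def intro: bij_betw_trans permutes_imp_bij permutes_inv)
    ultimately show ?case by blast
  qed
qed

definition relabel :: "nat \<Rightarrow> (nat \<Rightarrow> nat \<Rightarrow> nat) \<Rightarrow> (nat \<Rightarrow> nat) \<Rightarrow> nat \<Rightarrow> nat" where
  "relabel m \<sigma> \<alpha> = (\<lambda>i. if i < m then \<sigma> i (\<alpha> i) else \<alpha> i)"

lemma equivalent_relabel:
  assumes "\<forall>i<d. \<sigma> i permutes {..<4}" and "m \<le> d"
  shows "equivalent d 4 X (\<lambda>\<alpha>. X (relabel m \<sigma> \<alpha>))"
  using assms(2)
proof (induction m)
  case 0
  then show ?case by (simp add: relabel_def equivalent_def)
next
  case (Suc m)
  have "relabel (Suc m) \<sigma> \<alpha> = relabel m \<sigma> (\<alpha>(m := \<sigma> m (\<alpha> m)))" for \<alpha>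
    by (auto simp: relabel_def)
  then have "equiv_step d 4 (\<lambda>\<alpha>. X (relabel m \<sigma> \<alpha>)) (\<lambda>\<alpha>. X (relabel (Suc m) \<sigma> \<alpha>))"
    using Suc.prems assms(1) unfolding equiv_step_def by (intro disjI2 exI[of _ m] conjI exI[of _ "\<sigma> m"]) auto
  with Suc show ?case unfolding equivalent_def by (simp add: rtranclp.rtrancl_into_rtrancl)
qed

lemma relabel_idx:
  "\<alpha> \<in> idx d 4 \<Longrightarrow> \<forall>i<d. \<sigma> i permutes {..<4} \<Longrightarrow> relabel d \<sigma> \<alpha> \<in> idx d 4"
  by (auto simp: relabel_def idx_def dest: permutes_in_image)

lemma sum_matrix_relabel:
  "sum_matrix d \<phi> (relabel d \<sigma> \<alpha>) = sum_matrix d (\<lambda>i. \<phi> i \<circ> \<sigma> i) \<alpha>"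
  by (simp add: sum_matrix_def relabel_def)

lemma equivalent_step_right:
  "equivalent d n A B \<Longrightarrow> equiv_step d n B C \<Longrightarrow> equivalent d n A C"
  unfolding equivalent_def by (rule rtranclp.rtrancl_into_rtrancl)

lemma permutes_factor_bij_betw:
  assumes "bij_betw f S T" and "bij_betw g S T"
  shows "\<exists>\<sigma>. \<sigma> permutes S \<and> (\<forall>a\<in>S. f (\<sigma> a) = g a)"
proof (intro exI conjI ballI)
  let ?\<sigma> = "\<lambda>a. if a \<in> S then inv_into S f (g a) else a"
  have "bij_betw (inv_into S f \<circ> g) S S"
    using assms by (blast intro: bij_betw_trans bij_betw_inv_into)
  then have "bij_betw ?\<sigma> S S" by (rule bij_betw_cong[THEN iffD1, rotated]) simp
  then show "?\<sigma> permutes S" by (rule bij_imp_permutes) simp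
  show "f (?\<sigma> a) = g a" if "a \<in> S" for a
    using that assms by (simp add: bij_betw_inv_into_right bij_betw_apply)
qed

lemma relabelling_permutations:
  assumes "labelling d \<phi>"
  shows "\<exists>\<sigma>. \<forall>r<d. \<sigma> r permutes {..<4} \<and> (\<forall>a<4. \<phi> r (\<sigma> r a) = of_nat a + \<delta> r)"
proof -
  have "\<exists>\<sigma>. \<sigma> permutes {..<4} \<and> (\<forall>a<4. \<phi> r (\<sigma> a) = of_nat a + \<delta> r)" if "r < d" for r
  proof -
    have "bij_betw (\<lambda>a. of_nat a + \<delta> r) {..<4} (UNIV :: 4 set)"
      using bij_betw_trans[OF bij_betw_of_nat_Z4 bij_plus_right] by (simp add: comp_def)
    moreover have "bij_betw (\<phi> r) {..<4} UNIV" using assms that by (simp add: labelling_def)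
    ultimately obtain \<sigma> where "\<sigma> permutes {..<4}" "\<forall>a\<in>{..<4}. \<phi> r (\<sigma> a) = of_nat a + \<delta> r"
      using permutes_factor_bij_betw[of "\<phi> r" "{..<4}" UNIV "\<lambda>a. of_nat a + \<delta> r"] by blast
    then show ?thesis by auto
  qed
  then show ?thesis by metis
qed

section \<open>Block permutations\<close>

text \<open>For \<open>e \<in> {1,2,3}\<close> the block of \<open>p\<^sub>e\<close> containing \<open>a < 4\<close> is \<open>{a, a xor e}\<close>, and moving
  to the other symbol of the block flips \<open>\<mu>\<^sub>e\<close>.\<close>

definition partner :: "nat \<Rightarrow> nat \<Rightarrow> nat" where
  "partner e a = xor a e"

lemma partner_facts:
  assumes "e \<in> {1,2,3}" and "a < 4"
  shows partner_less_4: "partner e a < 4"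
    and partner_neq: "partner e a \<noteq> a"
    and partner_partner: "partner e (partner e a) = a"
    and pf_partner: "pf e (partner e a) = pf e a"
    and muf_partner: "muf e (partner e a) + muf e a = 1"
  using assms less_4_cases[OF assms(2)] by (elim insertE disjE; simp add: partner_def pf_def muf_def)+

lemma pf_le_1: "pf e a \<le> 1"
  by (simp add: pf_def)

lemma partner_0: "partner e 0 = e"
  by (simp add: partner_def)

lemma pf_eq_iff_partner:
  assumes "e \<in> {1,2,3}" and "a < 4" and "b < 4"
  shows "pf e a = pf e b \<longleftrightarrow> b = a \<or> b = partner e a"
  using assms(1) less_4_cases[OF assms(2)] less_4_cases[OF assms(3)]
  by (elim insertE disjE; simp add: partner_def pf_def)

lemma blockperm_flip_two:
  assumes E: "\<forall>i<d. E i \<in> {1,2,3}" and \<alpha>: "\<alpha> \<in> idx d 4" and jl: "j < d" "l < d" "j \<noteq> l"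
  shows "blockperm d E lb s (\<alpha>(j := partner (E j) (\<alpha> j), l := partner (E l) (\<alpha> l)))
    = blockperm d E lb s \<alpha>"
proof -
  let ?\<beta> = "\<alpha>(j := partner (E j) (\<alpha> j), l := partner (E l) (\<alpha> l))"
  have lt: "\<alpha> j < 4" "\<alpha> l < 4" using \<alpha> jl by (simp_all add: idx_def)
  have El: "E j \<in> {1,2,3}" "E l \<in> {1,2,3}" using E jl by simp_all
  have pf_eq: "pf (E i) (?\<beta> i) = pf (E i) (\<alpha> i)" for i
    using lt El by (simp add: pf_partner)
  have pvec: "pvec d E ?\<beta> = pvec d E \<alpha>"
    and pf_sum: "(\<Sum>i<d. pf (E i) (?\<beta> i)) = (\<Sum>i<d. pf (E i) (\<alpha> i))"
    by (simp_all only: pvec_def pf_eq)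
  let ?m = "\<lambda>\<gamma> i. muf (E i) (\<gamma> i)"
  have "sum (?m ?\<beta>) ({..<d} - {j, l}) = sum (?m \<alpha>) ({..<d} - {j, l})"
    by (rule sum.cong) auto
  then have \<beta>_sum: "sum (?m ?\<beta>) {..<d} = ?m ?\<beta> j + ?m ?\<beta> l + sum (?m \<alpha>) ({..<d} - {j, l})"
    using jl by (simp add: sum_remove_two)
  have \<alpha>_sum: "sum (?m \<alpha>) {..<d} = ?m \<alpha> j + ?m \<alpha> l + sum (?m \<alpha>) ({..<d} - {j, l})"
    using jl by (simp add: sum_remove_two)
  have flip: "?m ?\<beta> j + ?m \<alpha> j = 1" "?m ?\<beta> l + ?m \<alpha> l = 1"
    using jl lt El by (simp_all add: muf_partner)
  have parity: "(x + c) mod 2 = 0 \<longleftrightarrow> (y + c) mod 2 = 0"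
    if "x = p + q + r" "y = p' + q' + r" "p + p' = 1" "q + q' = 1" for x y p q r p' q' c :: nat
    using that by presburger
  have "(sum (?m ?\<beta>) {..<d} + lb (pvec d E \<alpha>)) mod 2 = 0
      \<longleftrightarrow> (sum (?m \<alpha>) {..<d} + lb (pvec d E \<alpha>)) mod 2 = 0"
    by (rule parity[OF \<beta>_sum \<alpha>_sum flip])
  then show ?thesis
    unfolding blockperm_def pvec pf_sum by (simp only:)
qed

lemma double_label_plus_double_pf_const:
  fixes f :: "nat \<Rightarrow> 4"
  assumes inj: "inj_on f {..<4}" and e: "e \<in> {1,2,3}"
    and partner: "\<forall>a<4. f (partner e a) = f a + 2" and ab: "a < 4" "b < 4"
  shows "2 * f a + 2 * of_nat (pf e a) = 2 * f b + 2 * of_nat (pf e b)"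
proof (cases "pf e a = pf e b")
  case True
  then have "b = a \<or> b = partner e a" using pf_eq_iff_partner e ab by blast
  then have "f b = f a \<or> f b = f a + 2" using partner ab by blast
  then have "2 * f b = 2 * f a" by (simp only: Z4_double_eq_iff)
  then show ?thesis using True by simp
next
  case False
  then have "b \<noteq> a" "b \<noteq> partner e a" using pf_partner[OF e ab(1)] by auto
  then have "f b \<noteq> f a" "f b \<noteq> f (partner e a)"
    using inj ab partner_less_4[OF e ab(1)] by (simp_all add: inj_on_eq_iff)
  then have "2 * f b \<noteq> 2 * f a"
    using partner ab by (simp only: Z4_double_eq_iff) simp
  then have f: "2 * f b = 2 * f a + 2" by (rule Z4_double_neq)
  have "pf e a = 0 \<and> pf e b = 1 \<or> pf e a = 1 \<and> pf e b = 0"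
    using False pf_le_1[of e a] pf_le_1[of e b] by linarith
  then have "2 * (of_nat (pf e b) :: 4) \<noteq> 2 * of_nat (pf e a)" by (elim disjE) simp_all
  then have pf: "2 * (of_nat (pf e b) :: 4) = 2 * of_nat (pf e a) + 2" by (rule Z4_double_neq)
  have "(2::4) + 2 = 0" by simp
  then show ?thesis unfolding f pf by (simp add: algebra_simps)
qed

locale block_labelling =
  fixes d :: nat and E :: "nat \<Rightarrow> nat" and lb :: "(nat \<Rightarrow> nat) \<Rightarrow> nat" and s :: nat
    and \<phi> :: "nat \<Rightarrow> nat \<Rightarrow> 4"
  assumes three_le_d: "3 \<le> d" and params: "bp_params d E lb s" and labelling: "labelling d \<phi>"
    and blockperm_eq: "\<forall>\<alpha>\<in>idx d 4. blockperm d E lb s \<alpha> = sum_matrix d \<phi> \<alpha>"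
begin

lemma E_range: "i < d \<Longrightarrow> E i \<in> {1,2,3}"
  using params by (simp add: bp_params_def)

lemma blockperm_iff_label_sum:
  "\<alpha> \<in> idx d 4 \<Longrightarrow> blockperm d E lb s \<alpha> = 1 \<longleftrightarrow> (\<Sum>i<d. \<phi> i (\<alpha> i)) = 0"
  using blockperm_eq by (simp add: sum_matrix_def)

lemma flip_two_labels:
  assumes il: "i < d" "l < d" "i \<noteq> l" and ab: "a < 4" "b < 4"
  shows "\<phi> i (partner (E i) a) + \<phi> l (partner (E l) b) = \<phi> i a + \<phi> l b"
proof -
  obtain m where m: "m < d" "m \<noteq> i" "m \<noteq> l"
    using ex_less_avoiding_two[OF three_le_d] by blast
  define x where "x = ((\<lambda>_. 0)(i := \<phi> i a, l := \<phi> l b, m := - (\<phi> i a + \<phi> l b)))"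
  obtain \<alpha> where \<alpha>: "\<alpha> \<in> idx d 4" and \<alpha>x: "\<forall>r<d. \<phi> r (\<alpha> r) = x r"
    using labelling_surj_idx[OF labelling, of x] by blast
  have "\<phi> i (\<alpha> i) = \<phi> i a" "\<phi> l (\<alpha> l) = \<phi> l b"
    using \<alpha>x il m by (simp_all add: x_def)
  then have \<alpha>_il: "\<alpha> i = a" "\<alpha> l = b"
    using labelling_inj[OF labelling] \<alpha> il ab by (simp_all add: idx_def)
  have "(\<Sum>r<d. \<phi> r (\<alpha> r)) = (\<Sum>r<d. x r)" using \<alpha>x by simp
  also have "\<dots> = 0" using il m unfolding x_def by (simp add: sum_fun_upd del: fun_upd_apply) simp
  finally have sum_\<alpha>: "(\<Sum>r<d. \<phi> r (\<alpha> r)) = 0" .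
  then have "blockperm d E lb s \<alpha> = 1" using \<alpha> blockperm_iff_label_sum by blast
  then have "blockperm d E lb s (\<alpha>(i := partner (E i) a, l := partner (E l) b)) = 1"
    using blockperm_flip_two[of d E \<alpha> i l] E_range \<alpha> il \<alpha>_il by simp
  moreover have "\<alpha>(i := partner (E i) a, l := partner (E l) b) \<in> idx d 4"
    using \<alpha> il ab E_range partner_less_4 by (simp add: idx_def)
  ultimately have "(\<Sum>r<d. \<phi> r ((\<alpha>(i := partner (E i) a, l := partner (E l) b)) r)) = 0"
    using blockperm_iff_label_sum by blast
  moreover
  let ?g = "\<lambda>r. \<phi> r (\<alpha> r)" and ?a' = "\<phi> i (partner (E i) a)" and ?b' = "\<phi> l (partner (E l) b)"
  have "(\<lambda>r. \<phi> r ((\<alpha>(i := partner (E i) a, l := partner (E l) b)) r)) = ?g(i := ?a', l := ?b')"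
    by (simp add: fun_eq_iff)
  moreover have "sum (?g(i := ?a', l := ?b')) {..<d} = sum (?g(i := ?a')) {..<d} - \<phi> l b + ?b'"
    using il \<alpha>_il by (simp add: sum_fun_upd del: fun_upd_apply) simp
  moreover have "sum (?g(i := ?a')) {..<d} = sum ?g {..<d} - \<phi> i a + ?a'"
    using il \<alpha>_il by (simp add: sum_fun_upd del: fun_upd_apply)
  ultimately have "(\<Sum>r<d. \<phi> r (\<alpha> r)) - \<phi> i a + ?a' - \<phi> l b + ?b' = 0"
    by metis
  with sum_\<alpha> show ?thesis
    by (simp add: algebra_simps eq_neg_iff_add_eq_0)
qed

lemma label_partner:
  assumes i: "i < d" and a: "a < 4"
  shows "\<phi> i (partner (E i) a) = \<phi> i a + 2"
proof -
  obtain l where l: "l < d" "l \<noteq> i"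
    using ex_less_avoiding_two[OF three_le_d] by blast
  have e: "E i \<in> {1,2,3}" using E_range i by simp
  let ?u = "\<phi> i (partner (E i) a) - \<phi> i a" and ?c = "\<phi> l 0 - \<phi> l (partner (E l) 0)"
  have "?u = ?c"
    using flip_two_labels[OF i l(1) l(2)[symmetric] a, of 0] by (simp add: algebra_simps)
  moreover have "- ?u = ?c"
    using flip_two_labels[OF i l(1) l(2)[symmetric] partner_less_4[OF e a], of 0]
    by (simp add: partner_partner[OF e a] algebra_simps)
  ultimately have "?u = - ?u" by simp
  moreover have "?u \<noteq> 0"
    using labelling_inj[OF labelling i partner_less_4[OF e a] a] partner_neq[OF e a] by auto
  ultimately have "?u = 2" using Z4_eq_neg_iff by blast
  then show ?thesis by (simp add: algebra_simps)
qed

lemma label_inv_into: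
  assumes "i < d"
  shows "inv_into {..<4} (\<phi> i) x < 4" and "\<phi> i (inv_into {..<4} (\<phi> i) x) = x"
    and "a < 4 \<Longrightarrow> inv_into {..<4} (\<phi> i) (\<phi> i a) = a"
proof -
  have bij: "bij_betw (\<phi> i) {..<4} UNIV" using labelling assms by (simp add: labelling_def)
  show "inv_into {..<4} (\<phi> i) x < 4"
    using bij_betw_inv_into[OF bij] by (auto simp: bij_betw_def)
  show "\<phi> i (inv_into {..<4} (\<phi> i) x) = x"
    using bij by (simp add: bij_betw_inv_into_right)
  show "a < 4 \<Longrightarrow> inv_into {..<4} (\<phi> i) (\<phi> i a) = a"
    using bij by (simp add: bij_betw_inv_into_left)
qed

lemma inv_label_plus_two:
  assumes "i < d"
  shows "inv_into {..<4} (\<phi> i) (x + 2) = partner (E i) (inv_into {..<4} (\<phi> i) x)"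
proof -
  let ?a = "inv_into {..<4} (\<phi> i) x"
  have "\<phi> i (partner (E i) ?a) = x + 2"
    using label_partner[OF assms label_inv_into(1)[OF assms]] label_inv_into(2)[OF assms] by simp
  moreover have "inv_into {..<4} (\<phi> i) (\<phi> i (partner (E i) ?a)) = partner (E i) ?a"
    using label_inv_into(3)[OF assms partner_less_4[OF E_range[OF assms] label_inv_into(1)[OF assms, of x]]] .
  ultimately show ?thesis by simp
qed

lemma in_filled_subcube_if_even_label_sum:
  assumes \<alpha>: "\<alpha> \<in> idx d 4" and even: "2 * (\<Sum>i<d. \<phi> i (\<alpha> i)) = 0"
  shows "\<exists>C\<in>filled_subcubes d E s. \<alpha> \<in> C"
proof -
  obtain \<alpha>\<^sub>0 where \<alpha>\<^sub>0: "\<alpha>\<^sub>0 \<in> idx d 4" and zero: "\<forall>i<d. \<phi> i (\<alpha>\<^sub>0 i) = 0"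
    using labelling_surj_idx[OF labelling, of "\<lambda>_. 0"] by blast
  then have "blockperm d E lb s \<alpha>\<^sub>0 = 1" using blockperm_iff_label_sum by simp
  then have s0: "(\<Sum>i<d. pf (E i) (\<alpha>\<^sub>0 i)) mod 2 = s"
    by (simp add: blockperm_def split: if_splits)
  have "2 * \<phi> i (\<alpha> i) + 2 * of_nat (pf (E i) (\<alpha> i))
      = 2 * \<phi> i (\<alpha>\<^sub>0 i) + 2 * of_nat (pf (E i) (\<alpha>\<^sub>0 i))" if i: "i < d" for i
  proof (rule double_label_plus_double_pf_const)
    show "inj_on (\<phi> i) {..<4}"
      using labelling i by (simp add: labelling_def bij_betw_def)
    show "E i \<in> {1,2,3}" using E_range i .
    show "\<forall>a<4. \<phi> i (partner (E i) a) = \<phi> i a + 2" using label_partner i by blast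
    show "\<alpha> i < 4" "\<alpha>\<^sub>0 i < 4" using \<alpha> \<alpha>\<^sub>0 i by (simp_all add: idx_def)
  qed
  then have "(\<Sum>i<d. 2 * \<phi> i (\<alpha> i) + 2 * of_nat (pf (E i) (\<alpha> i)))
      = (\<Sum>i<d. 2 * \<phi> i (\<alpha>\<^sub>0 i) + 2 * of_nat (pf (E i) (\<alpha>\<^sub>0 i)))"
    by (intro sum.cong) auto
  then have "2 * (\<Sum>i<d. \<phi> i (\<alpha> i)) + 2 * of_nat (\<Sum>i<d. pf (E i) (\<alpha> i))
      = 2 * (\<Sum>i<d. \<phi> i (\<alpha>\<^sub>0 i)) + 2 * (of_nat (\<Sum>i<d. pf (E i) (\<alpha>\<^sub>0 i)) :: 4)"
    by (simp add: sum.distrib sum_distrib_left)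
  then have "2 * (of_nat (\<Sum>i<d. pf (E i) (\<alpha> i)) :: 4) = 2 * of_nat (\<Sum>i<d. pf (E i) (\<alpha>\<^sub>0 i))"
    using even zero by simp
  then have "(\<Sum>i<d. pf (E i) (\<alpha> i)) mod 2 = (\<Sum>i<d. pf (E i) (\<alpha>\<^sub>0 i)) mod 2"
    by (simp only: double_of_nat_Z4_eq_iff)
  with s0 have "(\<Sum>i<d. pf (E i) (\<alpha> i)) mod 2 = s mod 2" by auto
  then have "pvec d E \<alpha> \<in> Qs d s"
    by (simp add: Qs_def cube_def weight_def pvec_def pf_le_1 le_less_trans[OF pf_le_1])
  moreover have "\<alpha> \<in> subcube d E (pvec d E \<alpha>)"
    using \<alpha> by (simp add: subcube_def pvec_def)
  ultimately show ?thesis by (auto simp: filled_subcubes_def)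
qed

end

lemma block_labelling_of_equivalent:
  assumes "equivalent d 4 B (Mmat 4 d)" and "3 \<le> d" and "bp_params d E lb s"
    and "\<forall>\<alpha>\<in>idx d 4. B \<alpha> = blockperm d E lb s \<alpha>"
  shows "\<exists>\<phi>. block_labelling d E lb s \<phi> \<and> (\<forall>\<alpha>\<in>idx d 4. B \<alpha> = sum_matrix d \<phi> \<alpha>)"
proof -
  obtain \<phi> where "labelling d \<phi>" and "\<forall>\<alpha>\<in>idx d 4. B \<alpha> = sum_matrix d \<phi> \<alpha>"
    using equivalent_M_imp_sum_matrix[OF assms(1)] by blast
  moreover from this have "block_labelling d E lb s \<phi>"
    using assms(2-4) by unfold_locales auto
  ultimately show ?thesis by blast
qed

section \<open>The tessellation index\<close>

lemma card_idx_box: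
  assumes "\<forall>i<d. T i \<subseteq> {..<4}"
  shows "card {\<alpha> \<in> idx d 4. \<forall>i<d. \<alpha> i \<in> T i} = (\<Prod>i<d. card (T i))"
proof -
  let ?A = "{\<alpha> \<in> idx d 4. \<forall>i<d. \<alpha> i \<in> T i}"
  have "bij_betw (\<lambda>\<alpha>. restrict \<alpha> {..<d}) ?A (PiE {..<d} T)"
  proof (rule bij_betw_byWitness[where f' = "\<lambda>\<beta> i. if i < d then \<beta> i else 0"])
    show "\<forall>\<alpha>\<in>?A. (\<lambda>i. if i < d then restrict \<alpha> {..<d} i else 0) = \<alpha>"
      by (auto simp: idx_def fun_eq_iff)
    show "\<forall>\<beta>\<in>PiE {..<d} T. restrict (\<lambda>i. if i < d then \<beta> i else 0) {..<d} = \<beta>"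
      by (auto simp: fun_eq_iff PiE_def extensional_def)
    show "(\<lambda>\<alpha>. restrict \<alpha> {..<d}) ` ?A \<subseteq> PiE {..<d} T"
      by (intro image_subsetI) (simp add: restrict_PiE_iff)
    show "(\<lambda>\<beta> i. if i < d then \<beta> i else 0) ` PiE {..<d} T \<subseteq> ?A"
      using assms by (auto simp: idx_def PiE_def Pi_def subset_iff)
  qed
  then show ?thesis by (simp add: bij_betw_same_card card_PiE)
qed

lemma card_pf_fibre:
  assumes "e \<in> {1,2,3}" "e' \<in> {1,2,3}" "y < 2" "y' < 2"
    and "{a. a < 4 \<and> pf e a = y \<and> pf e' a = y'} \<noteq> {}"
  shows "card {a. a < 4 \<and> pf e a = y \<and> pf e' a = y'} = (if e = e' then 2 else 1)"
proof -
  have "{a. a < 4 \<and> pf e a = y \<and> pf e' a = y'} = set (filter (\<lambda>a. pf e a = y \<and> pf e' a = y') [0,1,2,3])"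
    by (auto dest: less_4_cases)
  moreover have "y = 0 \<or> y = 1" "y' = 0 \<or> y' = 1" using assms(3,4) by auto
  ultimately show ?thesis using assms(1,2,5)
    by (elim insertE disjE emptyE) (simp_all add: pf_def)
qed

lemma card_subcube_inter:
  assumes E: "\<forall>i<d. E i \<in> {1,2,3}" and E': "\<forall>i<d. E' i \<in> {1,2,3}"
    and y: "y \<in> cube d" and y': "y' \<in> cube d"
    and ne: "subcube d E y \<inter> subcube d E' y' \<noteq> {}"
  shows "card (subcube d E y \<inter> subcube d E' y') = 2 ^ card {i\<in>{..<d}. E i = E' i}"
proof -
  define T where "T i = {a. a < 4 \<and> pf (E i) a = y i \<and> pf (E' i) a = y' i}" for i
  have box: "subcube d E y \<inter> subcube d E' y' = {\<alpha> \<in> idx d 4. \<forall>i<d. \<alpha> i \<in> T i}"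
    by (auto simp: subcube_def T_def idx_def)
  have "card (T i) = (if E i = E' i then 2 else 1)" if "i < d" for i
    unfolding T_def
  proof (rule card_pf_fibre)
    show "{a. a < 4 \<and> pf (E i) a = y i \<and> pf (E' i) a = y' i} \<noteq> {}"
      using ne that unfolding box T_def by blast
  qed (use E E' y y' that in \<open>auto simp: cube_def\<close>)
  then have "(\<Prod>i<d. card (T i)) = (\<Prod>i<d. if E i = E' i then 2 else 1)"
    by (intro prod.cong) auto
  also have "\<dots> = 2 ^ card {i\<in>{..<d}. E i = E' i}"
    by (simp add: prod.If_cases Int_def)
  finally show ?thesis
    unfolding box by (subst card_idx_box) (auto simp: T_def)
qed

lemma tess_index_eq_pred_imp_unique_disagreement:
  assumes E: "\<forall>i<d. E i \<in> {1,2,3}" and E': "\<forall>i<d. E' i \<in> {1,2,3}" and "0 < d"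
    and tess: "tess_index d E s E' s' = ereal (real (d - 1))"
  shows "\<exists>k<d. E k \<noteq> E' k \<and> (\<forall>i<d. i \<noteq> k \<longrightarrow> E i = E' i)"
proof -
  define G where "G = {i\<in>{..<d}. E i = E' i}"
  define J where "J = {j. \<exists>C\<in>filled_subcubes d E s. \<exists>C'\<in>filled_subcubes d E' s'.
    C \<inter> C' \<noteq> {} \<and> card (C \<inter> C') = 2 ^ j}"
  have "J \<subseteq> {card G}"
  proof
    fix j assume "j \<in> J"
    then obtain y y' where "y \<in> Qs d s" "y' \<in> Qs d s'"
      and "subcube d E y \<inter> subcube d E' y' \<noteq> {}"
      and "card (subcube d E y \<inter> subcube d E' y') = 2 ^ j"
      unfolding J_def filled_subcubes_def by blast
    then have "(2::nat) ^ j = 2 ^ card G"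
      using card_subcube_inter[OF E E'] by (auto simp: Qs_def G_def)
    then show "j \<in> {card G}" by simp
  qed
  moreover have "J \<noteq> {}"
    using tess by (auto simp: tess_index_def J_def[symmetric] bot_ereal_def)
  ultimately have "J = {card G}" by blast
  then have "card G = d - 1"
    using tess by (simp add: tess_index_def J_def[symmetric])
  moreover have "G \<subseteq> {..<d}" by (auto simp: G_def)
  ultimately have "card ({..<d} - G) = 1"
    using \<open>0 < d\<close> by (simp add: card_Diff_subset finite_subset)
  then obtain k where "{..<d} - G = {k}" by (rule card_1_singletonE)
  then show ?thesis by (intro exI[of _ k]) (auto simp: G_def)
qed

section \<open>Transition maps\<close>

lemma labelling_transition_inj:
  assumes "labelling d \<phi>" and "labelling d \<phi>'" and "r < d"
  shows "inj (\<lambda>x. \<phi>' r (inv_into {..<4} (\<phi> r) x))"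
proof -
  have "bij_betw (inv_into {..<4} (\<phi> r)) UNIV {..<4}"
    using assms(1,3) by (simp add: labelling_def bij_betw_inv_into)
  then have "bij_betw (\<phi>' r \<circ> inv_into {..<4} (\<phi> r)) UNIV UNIV"
    using assms(2,3) by (auto simp: labelling_def intro: bij_betw_trans)
  then show ?thesis by (simp add: bij_betw_def comp_def)
qed

lemma transition_commutes_with_two:
  assumes "block_labelling d E lb s \<phi>" and "block_labelling d E' lb' s' \<phi>'"
    and "i < d" and "E i = E' i"
  shows "\<phi>' i (inv_into {..<4} (\<phi> i) (x + 2)) = \<phi>' i (inv_into {..<4} (\<phi> i) x) + 2"
proof -
  interpret B: block_labelling d E lb s \<phi> by fact
  interpret B': block_labelling d E' lb' s' \<phi>' by fact
  show ?thesis
    using B.inv_label_plus_two[OF \<open>i < d\<close>] B'.label_partner[OF \<open>i < d\<close> B.label_inv_into(1)[OF \<open>i < d\<close>]]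
      \<open>E i = E' i\<close> by simp
qed

lemma transition_not_commutes_with_two:
  assumes "block_labelling d E lb s \<phi>" and "block_labelling d E' lb' s' \<phi>'"
    and "k < d" and "E k \<noteq> E' k"
  shows "\<not> (\<forall>x. \<phi>' k (inv_into {..<4} (\<phi> k) (x + 2)) = \<phi>' k (inv_into {..<4} (\<phi> k) x) + 2)"
proof
  interpret B: block_labelling d E lb s \<phi> by fact
  interpret B': block_labelling d E' lb' s' \<phi>' by fact
  assume commutes: "\<forall>x. \<phi>' k (inv_into {..<4} (\<phi> k) (x + 2)) = \<phi>' k (inv_into {..<4} (\<phi> k) x) + 2"
  have "inv_into {..<4} (\<phi> k) (\<phi> k 0 + 2) = E k"
    using B.inv_label_plus_two[OF \<open>k < d\<close>] B.label_inv_into(3)[OF \<open>k < d\<close>] by (simp add: partner_0)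
  then have "\<phi>' k (E k) = \<phi>' k (inv_into {..<4} (\<phi> k) (\<phi> k 0 + 2))" by simp
  also have "\<dots> = \<phi>' k 0 + 2"
    using commutes B.label_inv_into(3)[OF \<open>k < d\<close>, of 0] by simp
  also have "\<dots> = \<phi>' k (E' k)"
    using B'.label_partner[OF \<open>k < d\<close>, of 0] by (simp add: partner_0)
  finally have "\<phi>' k (E k) = \<phi>' k (E' k)" .
  moreover have "E k < 4" "E' k < 4" using B.E_range B'.E_range \<open>k < d\<close> by fastforce+
  ultimately have "E k = E' k" using labelling_inj[OF B'.labelling \<open>k < d\<close>] by blast
  with \<open>E k \<noteq> E' k\<close> show False ..
qed

lemma transition_no_sum_two:
  assumes "block_labelling d E lb s \<phi>" and "labelling d \<phi>'"
    and B: "\<forall>\<alpha>\<in>idx d 4. B \<alpha> = sum_matrix d \<phi> \<alpha>" and B': "\<forall>\<alpha>\<in>idx d 4. B' \<alpha> = sum_matrix d \<phi>' \<alpha>"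
    and supp: "\<forall>C\<in>filled_subcubes d E s. supp d 4 B' \<inter> C \<subseteq> supp d 4 B"
    and zero: "(\<Sum>r<d. \<phi>' r (inv_into {..<4} (\<phi> r) (x r))) = 0"
  shows "(\<Sum>r<d. x r) \<noteq> 2"
proof
  interpret block_labelling d E lb s \<phi> by fact
  assume two: "(\<Sum>r<d. x r) = 2"
  obtain \<alpha> where \<alpha>: "\<alpha> \<in> idx d 4" and \<alpha>x: "\<forall>r<d. \<phi> r (\<alpha> r) = x r"
    using labelling_surj_idx[OF labelling, of x] by blast
  have label_sum: "(\<Sum>r<d. \<phi> r (\<alpha> r)) = 2" using \<alpha>x two by simp
  have "inv_into {..<4} (\<phi> r) (x r) = \<alpha> r" if "r < d" for r
    using label_inv_into(3)[OF that, of "\<alpha> r"] \<alpha>x \<alpha> that by (simp add: idx_def)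
  then have "(\<Sum>r<d. \<phi>' r (\<alpha> r)) = 0" using zero by simp
  then have "\<alpha> \<in> supp d 4 B'" using \<alpha> B' by (simp add: supp_def sum_matrix_def)
  moreover obtain C where "C \<in> filled_subcubes d E s" "\<alpha> \<in> C"
    using in_filled_subcube_if_even_label_sum[OF \<alpha>] label_sum by (auto simp: Z4_numeral_reduce)
  ultimately have "\<alpha> \<in> supp d 4 B" using supp by blast
  then have "(\<Sum>r<d. \<phi> r (\<alpha> r)) = 0" using \<alpha> B by (simp add: supp_def sum_matrix_def split: if_splits)
  with label_sum show False by simp
qed

section \<open>Normal form of the transition maps\<close>

lemma affine_sum_decomposition:
  fixes \<psi> :: "nat \<Rightarrow> 4 \<Rightarrow> 4"
  assumes "k < d" and "\<forall>r<d. r \<noteq> k \<longrightarrow> (\<forall>x. \<psi> r x = e r * x + t r)"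
  shows "(\<Sum>r<d. \<psi> r (x r)) = \<psi> k (x k) + (\<Sum>r\<in>{..<d} - {k}. e r * x r) + (\<Sum>r\<in>{..<d} - {k}. t r)"
proof -
  have "(\<Sum>r<d. \<psi> r (x r)) = \<psi> k (x k) + (\<Sum>r\<in>{..<d} - {k}. \<psi> r (x r))"
    using assms(1) by (simp add: sum.remove)
  also have "(\<Sum>r\<in>{..<d} - {k}. \<psi> r (x r)) = (\<Sum>r\<in>{..<d} - {k}. e r * x r + t r)"
    using assms(2) by (intro sum.cong) auto
  finally show ?thesis by (simp add: sum.distrib add.assoc)
qed

lemma affine_units_agree:
  fixes \<psi> :: "nat \<Rightarrow> 4 \<Rightarrow> 4" and e t :: "nat \<Rightarrow> 4"
  assumes k: "k < d" and ij: "i < d" "j < d" "i \<noteq> k" "j \<noteq> k"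
    and aff: "\<forall>r<d. r \<noteq> k \<longrightarrow> (\<forall>x. \<psi> r x = e r * x + t r)"
    and units: "\<forall>r<d. r \<noteq> k \<longrightarrow> e r = 1 \<or> e r = 3"
    and inj: "inj (\<psi> k)" and noncomm: "\<not> (\<forall>x. \<psi> k (x + 2) = \<psi> k x + 2)"
    and no_two: "\<forall>x. (\<Sum>r<d. \<psi> r (x r)) = 0 \<longrightarrow> (\<Sum>r<d. x r) \<noteq> 2"
  shows "e i = e j"
proof (rule ccontr)
  assume ne: "e i \<noteq> e j"
  then have "i \<noteq> j" by auto
  let ?R = "{..<d} - {k}" and ?T = "\<Sum>r\<in>{..<d} - {k}. t r"
  have ei: "e i = 1 \<or> e i = 3" and ej: "e j = 1 \<or> e j = 3" using units ij by auto
  then have eij: "e i * e j = 3" using ne by (elim disjE) (simp_all add: Z4_numeral_reduce)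
  have ii: "e i * e i = 1" using Z4_unit_square[OF ei] .
  have double_shift: "2 * (a - e i * (\<psi> k a + ?T)) = 2" for a
  proof -
    \<comment> \<open>two vectors with \<open>\<psi>\<close>-sum \<open>0\<close> whose sums are \<open>a + c\<close> and \<open>a + c + 2\<close>, as \<open>e i * e j = 3\<close>\<close>
    let ?c = "- (e i * (\<psi> k a + ?T))"
    define x1 where "x1 = (\<lambda>_. 0)(k := a, i := ?c)"
    define x2 where "x2 = (\<lambda>_. 0)(k := a, i := ?c - e i * e j, j := 1)"
    have "(\<Sum>r\<in>?R. e r * x1 r) = e i * ?c"
      using k ij by (subst sum.mono_neutral_right[of ?R "{i}"]) (auto simp: x1_def)
    moreover have "(\<Sum>r\<in>?R. e r * x2 r) = e i * (?c - e i * e j) + e j"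
      using k ij \<open>i \<noteq> j\<close> by (subst sum.mono_neutral_right[of ?R "{i, j}"]) (auto simp: x2_def)
    ultimately have "(\<Sum>r<d. \<psi> r (x1 r)) = 0" "(\<Sum>r<d. \<psi> r (x2 r)) = 0"
      using affine_sum_decomposition[OF k aff] ij \<open>i \<noteq> j\<close>
      by (simp_all add: x1_def x2_def algebra_simps ii mult.assoc[symmetric])
    then have x12: "(\<Sum>r<d. x1 r) \<noteq> 2" "(\<Sum>r<d. x2 r) \<noteq> 2" using no_two by blast+
    have "(\<Sum>r<d. x1 r) = a + ?c"
      using k ij by (subst sum.mono_neutral_right[of "{..<d}" "{k, i}"]) (auto simp: x1_def)
    moreover have "(\<Sum>r<d. x2 r) = a + ?c + 2"
      using k ij \<open>i \<noteq> j\<close> eij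
      by (subst sum.mono_neutral_right[of "{..<d}" "{k, i, j}"]) (auto simp: x2_def Z4_numeral_reduce)
    ultimately have "a + ?c \<noteq> 2" "a + ?c + 2 \<noteq> 2" using x12 by simp_all
    then have "a + ?c \<noteq> 0" "a + ?c \<noteq> 2" by auto
    then have "2 * (a + ?c) = 2" by (rule Z4_double_eq_two)
    then show ?thesis by simp
  qed
  have two_ei: "2 * (e i * y) = 2 * y" for y
    using Z4_unit_double[OF ei] by (metis mult.assoc)
  have shift: "2 * b = 2 * \<psi> k b + 2 * ?T + 2" for b
  proof -
    have "2 * b - 2 * (\<psi> k b + ?T) = 2"
      using double_shift[of b] two_ei[of "\<psi> k b + ?T"] by (simp only: right_diff_distrib)
    then show ?thesis by (metis add.commute diff_eq_eq distrib_left)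
  qed
  have "\<psi> k (a + 2) = \<psi> k a + 2" for a
  proof -
    have "2 * \<psi> k (a + 2) + 2 * ?T + 2 = 2 * (a + 2)" by (rule shift[symmetric])
    also have "\<dots> = 2 * a" by (simp add: distrib_left Z4_numeral_reduce)
    also have "\<dots> = 2 * \<psi> k a + 2 * ?T + 2" by (rule shift)
    finally have "2 * \<psi> k (a + 2) = 2 * \<psi> k a" by (simp only: add_right_cancel)
    moreover have "\<psi> k (a + 2) \<noteq> \<psi> k a" using inj by (simp add: inj_eq)
    ultimately show ?thesis using Z4_double_eq_iff[of "\<psi> k (a + 2)" "\<psi> k a"] by blast
  qed
  then have "\<forall>x. \<psi> k (x + 2) = \<psi> k x + 2" by simp
  with noncomm show False by (rule notE)
qed

lemma common_unit_decomposition: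
  fixes \<psi> :: "nat \<Rightarrow> 4 \<Rightarrow> 4"
  assumes k: "k < d" and i\<^sub>0: "i\<^sub>0 < d" "i\<^sub>0 \<noteq> k"
    and inj: "\<forall>r<d. inj (\<psi> r)"
    and comm: "\<forall>r<d. r \<noteq> k \<longrightarrow> (\<forall>x. \<psi> r (x + 2) = \<psi> r x + 2)"
    and noncomm: "\<not> (\<forall>x. \<psi> k (x + 2) = \<psi> k x + 2)"
    and no_two: "\<forall>x. (\<Sum>r<d. \<psi> r (x r)) = 0 \<longrightarrow> (\<Sum>r<d. x r) \<noteq> 2"
  shows "\<exists>e T. (e = 1 \<or> e = 3) \<and>
    (\<forall>x. (\<Sum>r<d. \<psi> r (x r)) = \<psi> k (x k) + e * (\<Sum>r\<in>{..<d} - {k}. x r) + T)"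
proof -
  have "\<forall>r. \<exists>p :: 4 \<times> 4. r < d \<and> r \<noteq> k \<longrightarrow>
      (fst p = 1 \<or> fst p = 3) \<and> (\<forall>x. \<psi> r x = fst p * x + snd p)"
    using commutes_two_affine inj comm by simp
  then obtain p :: "nat \<Rightarrow> 4 \<times> 4" where p: "\<forall>r. r < d \<and> r \<noteq> k \<longrightarrow>
      (fst (p r) = 1 \<or> fst (p r) = 3) \<and> (\<forall>x. \<psi> r x = fst (p r) * x + snd (p r))"
    by metis
  define e where "e r = fst (p r)" for r
  define t where "t r = snd (p r)" for r
  have aff: "\<forall>r<d. r \<noteq> k \<longrightarrow> (\<forall>x. \<psi> r x = e r * x + t r)"
    and units: "\<forall>r<d. r \<noteq> k \<longrightarrow> e r = 1 \<or> e r = 3"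
    using p by (simp_all add: e_def t_def)
  have "e r = e i\<^sub>0" if "r < d" "r \<noteq> k" for r
    using affine_units_agree[OF k that(1) i\<^sub>0(1) that(2) i\<^sub>0(2) aff units] inj k noncomm no_two
    by simp
  then have "(\<Sum>r\<in>{..<d} - {k}. e r * x r) = e i\<^sub>0 * (\<Sum>r\<in>{..<d} - {k}. x r)" for x
    by (auto simp: sum_distrib_left intro!: sum.cong)
  then show ?thesis
    using affine_sum_decomposition[OF k aff] units i\<^sub>0 by auto
qed

lemma core_normal_form:
  fixes \<psi> :: "nat \<Rightarrow> 4 \<Rightarrow> 4"
  assumes k: "k < d" and i\<^sub>0: "i\<^sub>0 < d" "i\<^sub>0 \<noteq> k"
    and inj: "\<forall>r<d. inj (\<psi> r)"
    and comm: "\<forall>r<d. r \<noteq> k \<longrightarrow> (\<forall>x. \<psi> r (x + 2) = \<psi> r x + 2)"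
    and noncomm: "\<not> (\<forall>x. \<psi> k (x + 2) = \<psi> k x + 2)"
    and no_two: "\<forall>x. (\<Sum>r<d. \<psi> r (x r)) = 0 \<longrightarrow> (\<Sum>r<d. x r) \<noteq> 2"
  shows "\<exists>\<delta>. (\<Sum>r<d. \<delta> r) = 0 \<and> (\<forall>x. (\<Sum>r<d. \<psi> r (x r + \<delta> r)) = 0
           \<longleftrightarrow> (\<Sum>r<d. (if r = k then transpose 0 1 else id) (x r)) = 0)"
proof -
  let ?R = "{..<d} - {k}"
  obtain e T where e: "e = 1 \<or> e = 3"
    and sum_\<psi>: "\<And>x. (\<Sum>r<d. \<psi> r (x r)) = \<psi> k (x k) + e * (\<Sum>r\<in>?R. x r) + T"
    using common_unit_decomposition[OF assms] by blast
  have e_sq: "e * e = 1" using e by (rule Z4_unit_square)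
  define \<chi> where "\<chi> a = e * (\<psi> k a + T)" for a
  have e_\<chi>: "e * \<chi> a = \<psi> k a + T" for a
    by (simp add: \<chi>_def mult.assoc[symmetric] e_sq)
  have "inj \<chi>"
    using inj k by (metis injI inj_eq add_right_cancel e_\<chi>)
  moreover have "\<chi> a \<noteq> a + 2" for a
  proof
    \<comment> \<open>otherwise the vector with entries \<open>a\<close> at \<open>k\<close> and \<open>- \<chi> a\<close> at \<open>i\<^sub>0\<close> has \<open>\<psi>\<close>-sum \<open>0\<close> and sum \<open>2\<close>\<close>
    assume \<chi>a: "\<chi> a = a + 2"
    define x where "x = (\<lambda>_. 0)(k := a, i\<^sub>0 := - \<chi> a)"
    have "(\<Sum>r\<in>?R. x r) = - \<chi> a"
      using i\<^sub>0 by (subst sum.mono_neutral_right[of ?R "{i\<^sub>0}"]) (auto simp: x_def)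
    then have "(\<Sum>r<d. \<psi> r (x r)) = 0"
      using sum_\<psi>[of x] i\<^sub>0 e_\<chi>[of a] by (simp add: x_def)
    moreover have "(\<Sum>r<d. x r) = a - \<chi> a"
      using k i\<^sub>0 by (subst sum.mono_neutral_right[of "{..<d}" "{k, i\<^sub>0}"]) (auto simp: x_def)
    then have "(\<Sum>r<d. x r) = 2" using \<chi>a by (simp add: Z4_eq_neg_iff)
    ultimately show False using no_two by blast
  qed
  moreover have "\<not> (\<forall>x. \<chi> (x + 2) = \<chi> x + 2)"
  proof
    assume "\<forall>x. \<chi> (x + 2) = \<chi> x + 2"
    then have "\<psi> k (x + 2) + T = \<psi> k x + T + e * 2" for x
      by (metis distrib_left e_\<chi>)
    then have "\<forall>x. \<psi> k (x + 2) = \<psi> k x + 2"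
      using Z4_unit_double[OF e] by (simp add: mult.commute)
    with noncomm show False by (rule notE)
  qed
  ultimately obtain \<tau> where \<tau>: "\<forall>x. \<chi> (x + \<tau>) = transpose 0 1 x + \<tau>"
    using Z4_perm_normal_form by blast
  define \<delta> where "\<delta> = (\<lambda>_. 0)(k := \<tau>, i\<^sub>0 := - \<tau>)"
  show ?thesis
  proof (intro exI conjI allI)
    show "(\<Sum>r<d. \<delta> r) = 0"
      using k i\<^sub>0 by (subst sum.mono_neutral_right[of "{..<d}" "{k, i\<^sub>0}"]) (auto simp: \<delta>_def)
    fix x :: "nat \<Rightarrow> 4"
    let ?S = "\<Sum>r\<in>?R. x r"
    have "(\<Sum>r\<in>?R. \<delta> r) = - \<tau>"
      using i\<^sub>0 by (subst sum.mono_neutral_right[of ?R "{i\<^sub>0}"]) (auto simp: \<delta>_def)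
    then have "(\<Sum>r\<in>?R. x r + \<delta> r) = ?S - \<tau>" by (simp add: sum.distrib)
    moreover have "x k + \<delta> k = x k + \<tau>" using i\<^sub>0 by (simp add: \<delta>_def)
    ultimately have "e * (\<Sum>r<d. \<psi> r (x r + \<delta> r)) = e * (\<psi> k (x k + \<tau>) + e * (?S - \<tau>) + T)"
      using sum_\<psi>[of "\<lambda>r. x r + \<delta> r"] by simp
    also have "\<dots> = \<chi> (x k + \<tau>) + (?S - \<tau>)"
      by (simp add: \<chi>_def distrib_left mult.assoc[symmetric] e_sq add_ac)
    also have "\<dots> = transpose 0 1 (x k) + ?S" using \<tau> by simp
    also have "\<dots> = (\<Sum>r<d. (if r = k then transpose 0 1 else id) (x r))"
      using k by (simp add: sum.remove[of "{..<d}" k])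
    finally show "(\<Sum>r<d. \<psi> r (x r + \<delta> r)) = 0 \<longleftrightarrow> (\<Sum>r<d. (if r = k then transpose 0 1 else id) (x r)) = 0"
      using unit_mult_eq_0_iff[OF e_sq] by metis
  qed
qed

lemma relabelled_sum_matrix_eq_Mmat:
  assumes B: "\<forall>\<alpha>\<in>idx d 4. B \<alpha> = sum_matrix d \<phi> \<alpha>" and \<delta>: "(\<Sum>r<d. \<delta> r) = 0"
    and \<sigma>: "\<forall>r<d. \<sigma> r permutes {..<4}" and \<phi>\<sigma>: "\<forall>r<d. \<forall>a<4. \<phi> r (\<sigma> r a) = of_nat a + \<delta> r"
    and \<tau>: "\<tau> permutes {..<d}" and \<alpha>: "\<alpha> \<in> idx d 4"
  shows "B (relabel d \<sigma> (\<alpha> \<circ> \<tau>)) = Mmat 4 d \<alpha>"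
proof -
  have \<beta>: "\<alpha> \<circ> \<tau> \<in> idx d 4" using idx_comp_permutes[OF \<alpha> \<tau>] .
  then have "B (relabel d \<sigma> (\<alpha> \<circ> \<tau>)) = sum_matrix d (\<lambda>r. \<phi> r \<circ> \<sigma> r) (\<alpha> \<circ> \<tau>)"
    using B relabel_idx \<sigma> by (simp add: sum_matrix_relabel)
  also have "\<dots> = sum_matrix d (\<lambda>_. of_nat) (\<alpha> \<circ> \<tau>)"
    using \<phi>\<sigma> \<beta> \<delta> by (simp add: sum_matrix_def sum.distrib idx_def)
  also have "\<dots> = Mmat 4 d \<alpha>"
    using \<tau> by (simp add: sum_matrix_comp_permutes Mmat_eq_sum_matrix)
  finally show ?thesis .
qed

lemma relabelled_sum_matrix_eq_Mpi:
  assumes k: "k < d" and \<phi>: "labelling d \<phi>" and B': "\<forall>\<alpha>\<in>idx d 4. B' \<alpha> = sum_matrix d \<phi>' \<alpha>"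
    and normal: "\<forall>x. (\<Sum>r<d. \<phi>' r (inv_into {..<4} (\<phi> r) (x r + \<delta> r))) = 0
      \<longleftrightarrow> (\<Sum>r<d. (if r = k then transpose 0 1 else id) (x r)) = 0"
    and \<sigma>: "\<forall>r<d. \<sigma> r permutes {..<4}" and \<phi>\<sigma>: "\<forall>r<d. \<forall>a<4. \<phi> r (\<sigma> r a) = of_nat a + \<delta> r"
    and \<alpha>: "\<alpha> \<in> idx d 4"
  shows "B' (relabel d \<sigma> (\<alpha> \<circ> transpose k (d - 1))) = Mpi 4 d \<alpha>"
proof -
  define \<tau> where "\<tau> = transpose k (d - 1)"
  have \<tau>: "\<tau> permutes {..<d}" and inv_\<tau>: "inv \<tau> = \<tau>"
    using k by (auto simp: \<tau>_def intro: permutes_swap_id)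
  have \<beta>: "\<alpha> \<circ> \<tau> \<in> idx d 4" using idx_comp_permutes[OF \<alpha> \<tau>] .
  have \<phi>'\<sigma>: "\<phi>' r (\<sigma> r a) = \<phi>' r (inv_into {..<4} (\<phi> r) (of_nat a + \<delta> r))" if "r < d" "a < 4" for r a
    using \<phi>\<sigma> that \<sigma> \<phi> bij_betw_inv_into_left[of "\<phi> r" "{..<4}" UNIV "\<sigma> r a"]
    by (force simp: labelling_def dest: permutes_in_image)
  have "B' (relabel d \<sigma> (\<alpha> \<circ> \<tau>)) = sum_matrix d (\<lambda>r. \<phi>' r \<circ> \<sigma> r) (\<alpha> \<circ> \<tau>)"
    using B' relabel_idx[OF \<beta> \<sigma>] by (simp add: sum_matrix_relabel)
  also have "\<dots> = sum_matrix d (\<lambda>r. (if r = k then transpose 0 1 else id) \<circ> of_nat) (\<alpha> \<circ> \<tau>)"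
    using normal[rule_format, of "\<lambda>r. of_nat ((\<alpha> \<circ> \<tau>) r)"] \<phi>'\<sigma> \<beta>
    by (simp add: sum_matrix_def idx_def)
  also have "\<dots> = sum_matrix d (\<lambda>j. if j = d - 1 then transpose 0 1 \<circ> of_nat else of_nat) \<alpha>"
  proof -
    have "(\<lambda>j. (if \<tau> j = k then transpose 0 1 else id) \<circ> of_nat)
        = (\<lambda>j. if j = d - 1 then transpose 0 1 \<circ> of_nat else (of_nat :: nat \<Rightarrow> 4))"
      by (auto simp: \<tau>_def transpose_def fun_eq_iff)
    then show ?thesis using \<tau> by (simp add: sum_matrix_comp_permutes inv_\<tau>)
  qed
  also have "\<dots> = Mpi 4 d \<alpha>"
    using Mpi_eq_sum_matrix[OF \<alpha>] k by simp
  finally show ?thesis unfolding \<tau>_def .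
qed

lemma equivalent_Lmat_of_normal_form:
  fixes \<phi> \<phi>' :: "nat \<Rightarrow> nat \<Rightarrow> 4" and \<delta> :: "nat \<Rightarrow> 4"
  assumes k: "k < d" and \<phi>: "labelling d \<phi>"
    and B: "\<forall>\<alpha>\<in>idx d 4. B \<alpha> = sum_matrix d \<phi> \<alpha>" and B': "\<forall>\<alpha>\<in>idx d 4. B' \<alpha> = sum_matrix d \<phi>' \<alpha>"
    and \<delta>: "(\<Sum>r<d. \<delta> r) = 0"
    and normal: "\<forall>x. (\<Sum>r<d. \<phi>' r (inv_into {..<4} (\<phi> r) (x r + \<delta> r))) = 0
      \<longleftrightarrow> (\<Sum>r<d. (if r = k then transpose 0 1 else id) (x r)) = 0"
  shows "equivalent d 4 (\<lambda>\<alpha>. lam * B \<alpha> + (1 - lam) * B' \<alpha>) (Lmat 4 d lam)"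
proof -
  let ?A = "\<lambda>\<alpha>. lam * B \<alpha> + (1 - lam) * B' \<alpha>" and ?\<tau> = "transpose k (d - 1)"
  obtain \<sigma> where \<sigma>: "\<forall>r<d. \<sigma> r permutes {..<4}"
    and \<phi>\<sigma>: "\<forall>r<d. \<forall>a<4. \<phi> r (\<sigma> r a) = of_nat a + \<delta> r"
    using relabelling_permutations[OF \<phi>, of \<delta>] by blast
  have \<tau>: "?\<tau> permutes {..<d}" using k by (auto intro: permutes_swap_id)
  have "equiv_step d 4 (\<lambda>\<alpha>. ?A (relabel d \<sigma> \<alpha>)) (Lmat 4 d lam)"
    unfolding equiv_step_def
  proof (intro disjI1 exI conjI ballI)
    fix \<alpha> assume \<alpha>: "\<alpha> \<in> idx d 4"
    show "Lmat 4 d lam \<alpha> = (\<lambda>\<alpha>. ?A (relabel d \<sigma> \<alpha>)) (\<alpha> \<circ> ?\<tau>)"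
      using relabelled_sum_matrix_eq_Mmat[OF B \<delta> \<sigma> \<phi>\<sigma> \<tau> \<alpha>]
        relabelled_sum_matrix_eq_Mpi[OF k \<phi> B' normal \<sigma> \<phi>\<sigma> \<alpha>]
      by (simp add: Lmat_def)
  qed (rule \<tau>)
  with equivalent_relabel[OF \<sigma> order_refl, where X = ?A] show ?thesis
    by (rule equivalent_step_right)
qed

theorem mainTheorem13:
  fixes d :: nat and lam :: real and B B' A :: matrix
    and E E' :: "nat \<Rightarrow> nat" and lb lb' :: "(nat \<Rightarrow> nat) \<Rightarrow> nat" and s s' :: nat
  assumes "d \<ge> 3"
    and "0 < lam" and "lam < 1"
    and "equivalent d 4 B (Mmat 4 d)" and "equivalent d 4 B' (Mmat 4 d)"
    and "bp_params d E lb s" and "\<forall>\<alpha>\<in>idx d 4. B \<alpha> = blockperm d E lb s \<alpha>"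
    and "bp_params d E' lb' s'" and "\<forall>\<alpha>\<in>idx d 4. B' \<alpha> = blockperm d E' lb' s' \<alpha>"
    and "A = (\<lambda>\<alpha>. lam * B \<alpha> + (1 - lam) * B' \<alpha>)"
    and "tess_index d E s E' s' = ereal (real (d - 1))"
    and "\<forall>C\<in>filled_subcubes d E s. supp d 4 B' \<inter> C \<subseteq> supp d 4 B"
    and "\<forall>C'\<in>filled_subcubes d E' s'. supp d 4 B \<inter> C' \<subseteq> supp d 4 B'"
  shows "\<exists>L. in_L 4 d L \<and> equivalent d 4 A L"
proof -
  obtain \<phi> where bl: "block_labelling d E lb s \<phi>" and B\<phi>: "\<forall>\<alpha>\<in>idx d 4. B \<alpha> = sum_matrix d \<phi> \<alpha>"
    using block_labelling_of_equivalent[OF assms(4,1,6,7)] by blast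
  obtain \<phi>' where bl': "block_labelling d E' lb' s' \<phi>'" and B'\<phi>': "\<forall>\<alpha>\<in>idx d 4. B' \<alpha> = sum_matrix d \<phi>' \<alpha>"
    using block_labelling_of_equivalent[OF assms(5,1,8,9)] by blast
  obtain k where k: "k < d" "E k \<noteq> E' k" "\<forall>i<d. i \<noteq> k \<longrightarrow> E i = E' i"
    using tess_index_eq_pred_imp_unique_disagreement[OF _ _ _ assms(11)] assms(1,6,8)
    by (force simp: bp_params_def)
  obtain i\<^sub>0 where i\<^sub>0: "i\<^sub>0 < d" "i\<^sub>0 \<noteq> k" using ex_less_avoiding_two[OF assms(1)] by blast
  have \<phi>: "labelling d \<phi>" and \<phi>': "labelling d \<phi>'"
    using bl bl' by (simp_all add: block_labelling_def)
  obtain \<delta> where "(\<Sum>r<d. \<delta> r) = 0" and "\<forall>x. (\<Sum>r<d. \<phi>' r (inv_into {..<4} (\<phi> r) (x r + \<delta> r))) = 0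
      \<longleftrightarrow> (\<Sum>r<d. (if r = k then transpose 0 1 else id) (x r)) = 0"
    using core_normal_form[OF k(1) i\<^sub>0, of "\<lambda>r x. \<phi>' r (inv_into {..<4} (\<phi> r) x)"]
      labelling_transition_inj[OF \<phi> \<phi>'] transition_commutes_with_two[OF bl bl'] k
      transition_not_commutes_with_two[OF bl bl' k(1,2)]
      transition_no_sum_two[OF bl \<phi>' B\<phi> B'\<phi>' assms(12)]
    by blast
  then have "equivalent d 4 A (Lmat 4 d lam)"
    unfolding assms(10) by (rule equivalent_Lmat_of_normal_form[OF k(1) \<phi> B\<phi> B'\<phi>'])
  moreover have "in_L 4 d (Lmat 4 d lam)" using assms(2,3) by (auto simp: in_L_def)
  ultimately show ?thesis by blast
qed

end
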